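(* Let $\alpha,\beta\in\Bbbk^*$ be not roots of unity and $r,i\in\mathbb{Z}$ with $\alpha^w=\beta^n$. Then the Nichols algebra $\mathcal{B}(V(\alpha,\beta,x^rg^i))$ of the Yetter-Drinfeld module $V(\alpha,\beta,x^rg^i)$ over $B(n,w,\gamma)$ is infinite-dimensional.
   Context: $\Bbbk$ is an algebraically closed field of characteristic $0$; $n,w$ positive integers, $\gamma$ a primitive $n$-th root of unity. $H=B(n,w,\gamma)$ is the Hopf algebra generated by $x^{\pm1},g,y$ with relations $xx^{-1}=x^{-1}x=1$, $xg=gx$, $xy=yx$, $yg=\gamma gy$, $y^n=1-x^w=1-g^n$, with $\Delta(x)=x\otimes x$, $\Delta(g)=g\otimes g$, $\Delta(y)=y\otimes g+1\otimes y$, $\varepsilon(x)=\varepsilon(g)=1$, $\varepsilon(y)=0$, $S(x)=x^{-1}$, $S(g)=g^{-1}$, $S(y)=-yg^{-1}$. Yetter-Drinfeld modules are left-left: $\delta(h\cdot v)=h_{(1)}v_{(-1)}S(h_{(3)})\otimes h_{(2)}\cdot v_{(0)}$. The Nichols algebra of a Yetter-Drinfeld module $U$ is $\mathcal{B}(U)=T(U)/\bigoplus_{k\ge2}\ker(\mathfrak{S}_k)$, where $\mathfrak{S}_k$ is the braided symmetrizer on $U^{\otimes k}$ for the braiding $c(u\otimes u')=u_{(-1)}\cdot u'\otimes u_{(0)}$. Define $c_\beta^{r,i}(k,l)\in H$ ($0\le l\le k$) by $c_\beta^{r,i}(0,0)=x^rg^i$ and, for $k\ge0$: $c_\beta^{r,i}(k+1,0)=c_\beta^{r,i}(k,0)S(y)+\beta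 yc_\beta^{r,i}(k,0)S(g)$; for $0<l<k+1$, $c_\beta^{r,i}(k+1,l)=c_\beta^{r,i}(k,l)S(y)+\beta\gamma^{-l}yc_\beta^{r,i}(k,l)S(g)+c_\beta^{r,i}(k,l-1)S(g)$; $c_\beta^{r,i}(k+1,k+1)=c_\beta^{r,i}(k,k)S(g)$. When $\beta^n\ne1$ (as here), $V(\alpha,\beta,x^rg^i)$ is the Yetter-Drinfeld module over $H$ with basis $v_0,\dots,v_{n-1}$ and $x\cdot v_k=\alpha v_k$, $g\cdot v_k=\beta\gamma^{-k}v_k$, $y\cdot v_k=v_{k+1}$ ($k<n-1$), $y\cdot v_{n-1}=(1-\beta^n)v_0$, $\delta(v_k)=\sum_{l=0}^kc_\beta^{r,i}(k,l)\otimes v_l$. *)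

theory Defs
  imports Main "HOL-Library.Function_Algebras" "HOL-Combinatorics.Transposition"
    "HOL-Combinatorics.Permutations" "HOL-Computational_Algebra.Polynomial"
begin

text \<open>An endomorphism of V is an n x n matrix M :: nat => nat => 'a, where M p q is the
  coefficient of v_p in M . v_q.\<close>

definition mat_mult :: "nat \<Rightarrow> (nat \<Rightarrow> nat \<Rightarrow> 'a::field) \<Rightarrow> (nat \<Rightarrow> nat \<Rightarrow> 'a) \<Rightarrow> (nat \<Rightarrow> nat \<Rightarrow> 'a)" where
  "mat_mult n A B = (\<lambda>p q. \<Sum>j<n. A p j * B j q)"

definition mat_scal :: "'a::field \<Rightarrow> (nat \<Rightarrow> nat \<Rightarrow> 'a) \<Rightarrow> (nat \<Rightarrow> nat \<Rightarrow> 'a)" where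
  "mat_scal c A = (\<lambda>p q. c * A p q)"

text \<open>Action of the generators of B(n,w,gamma) on V(alpha,beta,x^r g^i).\<close>

definition rho_x :: "'a::field \<Rightarrow> nat \<Rightarrow> nat \<Rightarrow> 'a" where
  "rho_x \<alpha> = (\<lambda>p q. if p = q then \<alpha> else 0)"

definition rho_g :: "nat \<Rightarrow> 'a::field \<Rightarrow> 'a \<Rightarrow> nat \<Rightarrow> nat \<Rightarrow> 'a" where
  "rho_g n \<gamma> \<beta> = (\<lambda>p q. if p = q then \<beta> * inverse (\<gamma> ^ p) else 0)"

definition rho_g_pow :: "nat \<Rightarrow> 'a::field \<Rightarrow> 'a \<Rightarrow> int \<Rightarrow> nat \<Rightarrow> nat \<Rightarrow> 'a" where
  "rho_g_pow n \<gamma> \<beta> j = (\<lambda>p q. if p = q then (\<beta> * inverse (\<gamma> ^ p)) powi j else 0)"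

definition rho_y :: "nat \<Rightarrow> 'a::field \<Rightarrow> nat \<Rightarrow> nat \<Rightarrow> 'a" where
  "rho_y n \<beta> = (\<lambda>p q. if q + 1 < n then (if p = q + 1 then 1 else 0)
                       else (if p = 0 then 1 - \<beta> ^ n else 0))"

text \<open>rho(S(g)) = rho(g^{-1}) and rho(S(y)) = - rho(y) rho(g^{-1}).\<close>
definition rho_Sg :: "nat \<Rightarrow> 'a::field \<Rightarrow> 'a \<Rightarrow> nat \<Rightarrow> nat \<Rightarrow> 'a" where
  "rho_Sg n \<gamma> \<beta> = rho_g_pow n \<gamma> \<beta> (-1)"

definition rho_Sy :: "nat \<Rightarrow> 'a::field \<Rightarrow> 'a \<Rightarrow> nat \<Rightarrow> nat \<Rightarrow> 'a" where
  "rho_Sy n \<gamma> \<beta> = mat_scal (-1) (mat_mult n (rho_y n \<beta>) (rho_Sg n \<gamma> \<beta>))"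

definition rho_base :: "nat \<Rightarrow> 'a::field \<Rightarrow> 'a \<Rightarrow> 'a \<Rightarrow> int \<Rightarrow> int \<Rightarrow> nat \<Rightarrow> nat \<Rightarrow> 'a" where
  "rho_base n \<gamma> \<alpha> \<beta> r i = mat_mult n (mat_scal (\<alpha> powi r) (\<lambda>p q. if p = q then 1 else 0))
                                         (rho_g_pow n \<gamma> \<beta> i)"

text \<open>Image in End(V) of the elements c_beta^{r,i}(k,l) of H, via the recursion of the paper
  (rho is an algebra map, so the recursion is transported verbatim).  Set to 0 for l > k.\<close>
fun cmat :: "nat \<Rightarrow> 'a::field \<Rightarrow> 'a \<Rightarrow> 'a \<Rightarrow> int \<Rightarrow> int \<Rightarrow> nat \<Rightarrow> nat \<Rightarrow> nat \<Rightarrow> nat \<Rightarrow> 'a" where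
  "cmat n \<gamma> \<alpha> \<beta> r i 0 l =
     (if l = 0 then rho_base n \<gamma> \<alpha> \<beta> r i else (\<lambda>_ _. 0))"
| "cmat n \<gamma> \<alpha> \<beta> r i (Suc k) l =
     (if l = 0 then
        mat_mult n (cmat n \<gamma> \<alpha> \<beta> r i k 0) (rho_Sy n \<gamma> \<beta>)
        + mat_scal \<beta> (mat_mult n (mat_mult n (rho_y n \<beta>) (cmat n \<gamma> \<alpha> \<beta> r i k 0)) (rho_Sg n \<gamma> \<beta>))
      else if l < Suc k then
        mat_mult n (cmat n \<gamma> \<alpha> \<beta> r i k l) (rho_Sy n \<gamma> \<beta>)
        + mat_scal (\<beta> * inverse (\<gamma> ^ l))
            (mat_mult n (mat_mult n (rho_y n \<beta>) (cmat n \<gamma> \<alpha> \<beta> r i k l)) (rho_Sg n \<gamma> \<beta>))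
        + mat_mult n (cmat n \<gamma> \<alpha> \<beta> r i k (l - 1)) (rho_Sg n \<gamma> \<beta>)
      else if l = Suc k then
        mat_mult n (cmat n \<gamma> \<alpha> \<beta> r i k k) (rho_Sg n \<gamma> \<beta>)
      else (\<lambda>_ _. 0))"

text \<open>Braiding c(v_a (x) v_b) = sum_{l<=a} c(a,l).v_b (x) v_l; braid_coef ... a b p l is the
  coefficient of v_p (x) v_l in c(v_a (x) v_b).\<close>
definition braid_coef :: "nat \<Rightarrow> 'a::field \<Rightarrow> 'a \<Rightarrow> 'a \<Rightarrow> int \<Rightarrow> int \<Rightarrow> nat \<Rightarrow> nat \<Rightarrow> nat \<Rightarrow> nat \<Rightarrow> 'a" where
  "braid_coef n \<gamma> \<alpha> \<beta> r i a b p l = (if l \<le> a then cmat n \<gamma> \<alpha> \<beta> r i a l p b else 0)"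

text \<open>An element of V^{(x)k} is a function on words (basis v_{u_0} (x) ... (x) v_{u_{k-1}}).\<close>
definition words :: "nat \<Rightarrow> nat \<Rightarrow> nat list set" where
  "words n k = {u. length u = k \<and> set u \<subseteq> {..<n}}"

definition tensor_space :: "nat \<Rightarrow> nat \<Rightarrow> (nat list \<Rightarrow> 'a::field) set" where
  "tensor_space n k = {f. \<forall>u. u \<notin> words n k \<longrightarrow> f u = 0}"

definition tscale :: "'a::field \<Rightarrow> (nat list \<Rightarrow> 'a) \<Rightarrow> (nat list \<Rightarrow> 'a)" where
  "tscale c f = (\<lambda>u. c * f u)"

text \<open>c_j = id^{(x)j} (x) c (x) id acting on positions j, j+1 (0-based), for a braiding
  given by coefficients C a b p l.\<close>
definition braid_op :: "(nat \<Rightarrow> nat \<Rightarrow> nat \<Rightarrow> nat \<Rightarrow> 'a::field) \<Rightarrow> nat \<Rightarrow> nat \<Rightarrow> nat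
    \<Rightarrow> (nat list \<Rightarrow> 'a) \<Rightarrow> (nat list \<Rightarrow> 'a)" where
  "braid_op C n k j f = (\<lambda>u. if u \<in> words n k then
      (\<Sum>a<n. \<Sum>b<n. f (u[j := a, Suc j := b]) * C a b (u ! j) (u ! Suc j)) else 0)"

definition word_op :: "(nat \<Rightarrow> nat \<Rightarrow> nat \<Rightarrow> nat \<Rightarrow> 'a::field) \<Rightarrow> nat \<Rightarrow> nat \<Rightarrow> nat list
    \<Rightarrow> (nat list \<Rightarrow> 'a) \<Rightarrow> (nat list \<Rightarrow> 'a)" where
  "word_op C n k ws = foldr (\<lambda>j g. braid_op C n k j \<circ> g) ws id"

definition perm_of_word :: "nat list \<Rightarrow> nat \<Rightarrow> nat" where
  "perm_of_word ws = foldr (\<lambda>j \<sigma>. Transposition.transpose j (Suc j) \<circ> \<sigma>) ws id"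

definition reduced_word :: "nat \<Rightarrow> (nat \<Rightarrow> nat) \<Rightarrow> nat list \<Rightarrow> bool" where
  "reduced_word k \<sigma> ws \<longleftrightarrow> (\<forall>j\<in>set ws. Suc j < k) \<and> perm_of_word ws = \<sigma> \<and>
     (\<forall>ws'. (\<forall>j\<in>set ws'. Suc j < k) \<and> perm_of_word ws' = \<sigma> \<longrightarrow> length ws \<le> length ws')"

definition matsumoto :: "(nat \<Rightarrow> nat \<Rightarrow> nat \<Rightarrow> nat \<Rightarrow> 'a::field) \<Rightarrow> nat \<Rightarrow> nat \<Rightarrow> (nat \<Rightarrow> nat)
    \<Rightarrow> (nat list \<Rightarrow> 'a) \<Rightarrow> (nat list \<Rightarrow> 'a)" where
  "matsumoto C n k \<sigma> = word_op C n k (SOME ws. reduced_word k \<sigma> ws)"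

definition braided_symmetrizer :: "(nat \<Rightarrow> nat \<Rightarrow> nat \<Rightarrow> nat \<Rightarrow> 'a::field) \<Rightarrow> nat \<Rightarrow> nat
    \<Rightarrow> (nat list \<Rightarrow> 'a) \<Rightarrow> (nat list \<Rightarrow> 'a)" where
  "braided_symmetrizer C n k f = (\<lambda>u. \<Sum>\<sigma>\<in>{\<sigma>. \<sigma> permutes {..<k}}. matsumoto C n k \<sigma> f u)"

definition symmetrizer_kernel :: "(nat \<Rightarrow> nat \<Rightarrow> nat \<Rightarrow> nat \<Rightarrow> 'a::field) \<Rightarrow> nat \<Rightarrow> nat
    \<Rightarrow> (nat list \<Rightarrow> 'a) set" where
  "symmetrizer_kernel C n k =
     {f \<in> tensor_space n k. braided_symmetrizer C n k f = (\<lambda>_. 0)}"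

text \<open>dim B^k(U) = dim (U^{(x)k} / ker S_k) for k >= 2, and B^0 = k, B^1 = U.\<close>
definition nichols_component_dim :: "(nat \<Rightarrow> nat \<Rightarrow> nat \<Rightarrow> nat \<Rightarrow> 'a::field) \<Rightarrow> nat \<Rightarrow> nat \<Rightarrow> nat" where
  "nichols_component_dim C n k =
     (if k < 2 then vector_space.dim tscale (tensor_space n k :: (nat list \<Rightarrow> 'a) set)
      else vector_space.dim tscale (tensor_space n k :: (nat list \<Rightarrow> 'a) set)
           - vector_space.dim tscale (symmetrizer_kernel C n k))"

definition nichols_infinite_dimensional :: "(nat \<Rightarrow> nat \<Rightarrow> nat \<Rightarrow> nat \<Rightarrow> 'a::field) \<Rightarrow> nat \<Rightarrow> bool" where
  "nichols_infinite_dimensional C n \<longleftrightarrow>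
     (\<forall>D::nat. \<exists>N. D < (\<Sum>k<N. nichols_component_dim C n k))"

definition alg_closed_field :: "'a::field itself \<Rightarrow> bool" where
  "alg_closed_field _ \<longleftrightarrow> (\<forall>p :: 'a poly. degree p \<noteq> 0 \<longrightarrow> (\<exists>z. poly p z = 0))"

definition primitive_root :: "nat \<Rightarrow> 'a::field \<Rightarrow> bool" where
  "primitive_root n \<gamma> \<longleftrightarrow> \<gamma> ^ n = 1 \<and> (\<forall>m. 0 < m \<and> m < n \<longrightarrow> \<gamma> ^ m \<noteq> 1)"

definition root_of_unity :: "'a::field \<Rightarrow> bool" where
  "root_of_unity z \<longleftrightarrow> (\<exists>m>0. z ^ m = 1)"

end

theory Submission
  imports Defs
begin

(* Let q_m = alpha^r (beta gamma^-m)^(i - m), so that c(v_m (x) v_m) = q_m v_m (x) v_m + (lower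
   terms).  Some q_m with m < n is 1 or not a root of unity: for n = 1 we have beta = alpha^w and
   q_0 = alpha^(r + w i), and for n > 1 we have q_0 = q_1 beta gamma^(i - 1) with beta not a root
   of unity.
   The braiding is triangular: c(v_a (x) v_b) only involves terms v_p (x) v_l with l <= a and
   p + l <= a + b.  So, along a reduced expression of sigma, the label weight carried into the first
   t positions never exceeds that of v_m^(x)k, and the coefficient of v_m^(x)k in the Matsumoto
   lift of sigma applied to v_m^(x)k is q_m^l(sigma).  Summing over sigma, the coefficient of
   v_m^(x)k in S_k(v_m^(x)k) is prod_(j <= k) (1 + q_m + ... + q_m^(j-1)), which is nonzero; so
   every homogeneous component of degree at least 2 is nonzero. *)

section \<open>Inversions and reduced words\<close>

abbreviation adj_transp :: "nat \<Rightarrow> nat \<Rightarrow> nat" where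
  "adj_transp j \<equiv> Transposition.transpose j (Suc j)"

fun word_perm_inv :: "nat list \<Rightarrow> nat \<Rightarrow> nat" where
  "word_perm_inv [] = id"
| "word_perm_inv (j # ws) = word_perm_inv ws \<circ> adj_transp j"

fun inversion_adding :: "nat list \<Rightarrow> bool" where
  "inversion_adding [] = True"
| "inversion_adding (j # ws) \<longleftrightarrow>
     word_perm_inv ws j < word_perm_inv ws (Suc j) \<and> inversion_adding ws"

definition inversions :: "nat \<Rightarrow> (nat \<Rightarrow> nat) \<Rightarrow> (nat \<times> nat) set" where
  "inversions k Q = {(x, y). x < y \<and> y < k \<and> Q y < Q x}"

definition inversion_count :: "nat \<Rightarrow> (nat \<Rightarrow> nat) \<Rightarrow> nat" where
  "inversion_count k Q = card (inversions k Q)"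

lemma finite_inversions: "finite (inversions k Q)"
proof -
  have "inversions k Q \<subseteq> {..<k} \<times> {..<k}" unfolding inversions_def by auto
  then show ?thesis by (rule finite_subset) auto
qed

lemma inversion_count_id: "inversion_count k id = 0"
proof -
  have "inversions k id = {}" unfolding inversions_def by auto
  then show ?thesis unfolding inversion_count_def by simp
qed

lemma adj_transp_less_adj_transp:
  "x < y \<Longrightarrow> (x, y) \<noteq> (j, Suc j) \<Longrightarrow> adj_transp j x < adj_transp j y"
  unfolding Transposition.transpose_def by auto

lemma adj_transp_adj_transp [simp]: "adj_transp j (adj_transp j x) = x"
  unfolding Transposition.transpose_def by auto

lemma comp_adj_transp_adj_transp [simp]: "Q \<circ> adj_transp j \<circ> adj_transp j = Q"
  by (rule ext) simp

lemma adj_transp_less_iff: "Suc j < k \<Longrightarrow> adj_transp j x < k \<longleftrightarrow> x < k"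
  unfolding Transposition.transpose_def by auto

lemma inversions_comp_adj_transp:
  assumes jk: "Suc j < k" and ascent: "Q j < Q (Suc j)"
  shows "inversions k (Q \<circ> adj_transp j) =
    insert (j, Suc j) (map_prod (adj_transp j) (adj_transp j) ` inversions k Q)"
proof (rule set_eqI, rule iffI)
  fix z assume z: "z \<in> inversions k (Q \<circ> adj_transp j)"
  obtain x y where xy: "z = (x, y)" by (cases z)
  show "z \<in> insert (j, Suc j) (map_prod (adj_transp j) (adj_transp j) ` inversions k Q)"
  proof (cases "(x, y) = (j, Suc j)")
    case True then show ?thesis using xy by simp
  next
    case False
    have "x < y" "y < k" "Q (adj_transp j y) < Q (adj_transp j x)"
      using z xy unfolding inversions_def by auto
    then have "(adj_transp j x, adj_transp j y) \<in> inversions k Q"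
      using adj_transp_less_adj_transp[OF \<open>x < y\<close> False] adj_transp_less_iff[OF jk]
      unfolding inversions_def by auto
    moreover have "z = map_prod (adj_transp j) (adj_transp j) (adj_transp j x, adj_transp j y)"
      using xy by simp
    ultimately show ?thesis by blast
  qed
next
  fix z assume "z \<in> insert (j, Suc j) (map_prod (adj_transp j) (adj_transp j) ` inversions k Q)"
  then consider "z = (j, Suc j)"
    | x y where "(x, y) \<in> inversions k Q" "z = (adj_transp j x, adj_transp j y)" by auto
  then show "z \<in> inversions k (Q \<circ> adj_transp j)"
  proof cases
    case 1 then show ?thesis using ascent jk unfolding inversions_def
      by (simp add: Transposition.transpose_def)
  next
    case (2 x y)
    then have "x < y" "y < k" "Q y < Q x" "(x, y) \<noteq> (j, Suc j)"
      using ascent unfolding inversions_def by auto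
    then show ?thesis
      using 2 adj_transp_less_adj_transp adj_transp_less_iff[OF jk] unfolding inversions_def by auto
  qed
qed

lemma inversion_count_swap_ascent:
  assumes "Suc j < k" and "Q j < Q (Suc j)"
  shows "inversion_count k (Q \<circ> adj_transp j) = Suc (inversion_count k Q)"
proof -
  let ?swap = "map_prod (adj_transp j) (adj_transp j)"
  have "inj ?swap" by (rule inj_on_inverseI[where g = ?swap]) auto
  then have card: "card (?swap ` inversions k Q) = inversion_count k Q"
    unfolding inversion_count_def by (simp add: card_image inj_on_subset)
  have "(j, Suc j) \<notin> ?swap ` inversions k Q"
    using assms(2) unfolding inversions_def Transposition.transpose_def by (auto split: if_splits)
  then show ?thesis unfolding inversion_count_def inversions_comp_adj_transp[OF assms]
    using card finite_inversions by (simp add: inversion_count_def)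
qed

lemma inversion_count_swap_descent:
  assumes jk: "Suc j < k" and "Q (Suc j) < Q j"
  shows "inversion_count k Q = Suc (inversion_count k (Q \<circ> adj_transp j))"
proof -
  have "(Q \<circ> adj_transp j) j < (Q \<circ> adj_transp j) (Suc j)"
    using assms(2) by (simp add: Transposition.transpose_def)
  from inversion_count_swap_ascent[OF jk this] show ?thesis
    by (simp only: comp_adj_transp_adj_transp)
qed

lemma word_perm_inv_permutes: "\<forall>j\<in>set ws. Suc j < k \<Longrightarrow> word_perm_inv ws permutes {..<k}"
proof (induction ws)
  case Nil then show ?case by (simp only: word_perm_inv.simps permutes_id)
next
  case (Cons j ws)
  then have "adj_transp j permutes {..<k}" "word_perm_inv ws permutes {..<k}"
    by (auto intro: permutes_swap_id)
  then show ?case by (simp only: word_perm_inv.simps permutes_compose)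
qed

lemma inversion_count_word:
  assumes "\<forall>j\<in>set ws. Suc j < k"
  shows "inversion_count k (word_perm_inv ws) \<le> length ws"
    and "inversion_count k (word_perm_inv ws) = length ws \<Longrightarrow> inversion_adding ws"
proof -
  have "inversion_count k (word_perm_inv ws) \<le> length ws \<and>
      (inversion_count k (word_perm_inv ws) = length ws \<longrightarrow> inversion_adding ws)"
    using assms
  proof (induction ws)
    case Nil then show ?case by (simp only: word_perm_inv.simps inversion_count_id) simp
  next
    case (Cons j ws)
    let ?R = "word_perm_inv ws"
    have jk: "Suc j < k" using Cons.prems by simp
    have "inj ?R" using word_perm_inv_permutes[of ws k] Cons.prems permutes_inj by auto
    then have "?R j \<noteq> ?R (Suc j)" by (auto dest: injD)
    then consider "?R j < ?R (Suc j)" | "?R (Suc j) < ?R j" by linarith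
    then show ?case
    proof cases
      case 1
      from inversion_count_swap_ascent[OF jk this] show ?thesis using Cons 1 by (simp add: comp_def)
    next
      case 2
      from inversion_count_swap_descent[OF jk this] show ?thesis using Cons 2 by (simp add: comp_def)
    qed
  qed
  then show "inversion_count k (word_perm_inv ws) \<le> length ws"
    and "inversion_count k (word_perm_inv ws) = length ws \<Longrightarrow> inversion_adding ws" by auto
qed

lemma permutes_eq_id_if_ascending:
  assumes perm: "Q permutes {..<k}" and asc: "\<And>j. Suc j < k \<Longrightarrow> Q j < Q (Suc j)"
  shows "Q = id"
proof (rule permutes_natset_ge[OF perm], intro ballI)
  fix x assume "x \<in> {..<k}"
  then show "x \<le> Q x"
  proof (induction x)
    case (Suc x) then show ?case using asc[of x] by simp
  qed simp
qed

lemma permutes_adjacent_descent: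
  assumes perm: "Q permutes {..<k}" and "Q \<noteq> id"
  obtains j where "Suc j < k" "Q (Suc j) < Q j"
proof -
  have "Q j \<noteq> Q (Suc j)" for j using injD[OF permutes_inj[OF perm], of j "Suc j"] by auto
  then have "Q j < Q (Suc j)" if "\<not> Q (Suc j) < Q j" for j using that by (meson linorder_neqE)
  then show thesis using that permutes_eq_id_if_ascending[OF perm] assms(2) by blast
qed

lemma exists_word_of_inversion_count:
  "Q permutes {..<k} \<Longrightarrow>
    \<exists>ws. (\<forall>j\<in>set ws. Suc j < k) \<and> word_perm_inv ws = Q \<and> length ws = inversion_count k Q"
proof (induction "inversion_count k Q" arbitrary: Q rule: less_induct)
  case less
  show ?case
  proof (cases "Q = id")
    case True
    then show ?thesis by (intro exI[of _ "[]"]) (simp add: inversion_count_id)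
  next
    case False
    then obtain j where j: "Suc j < k" "Q (Suc j) < Q j"
      using permutes_adjacent_descent[OF less.prems] by blast
    note count = inversion_count_swap_descent[OF j]
    have "Q \<circ> adj_transp j permutes {..<k}"
      using less.prems j by (intro permutes_compose permutes_swap_id) auto
    then obtain ws where "\<forall>j\<in>set ws. Suc j < k" "word_perm_inv ws = Q \<circ> adj_transp j"
        "length ws = inversion_count k (Q \<circ> adj_transp j)"
      using less.hyps count by auto
    then show ?thesis using j count by (intro exI[of _ "j # ws"]) simp
  qed
qed

lemma perm_of_word_Cons: "perm_of_word (j # ws) = adj_transp j \<circ> perm_of_word ws"
  by (simp add: perm_of_word_def)

lemma perm_of_word_word_perm_inv:
  "perm_of_word ws \<circ> word_perm_inv ws = id \<and> word_perm_inv ws \<circ> perm_of_word ws = id"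
proof (induction ws)
  case Nil
  show ?case by (simp add: perm_of_word_def)
next
  case (Cons j ws)
  then have "perm_of_word ws (word_perm_inv ws x) = x" "word_perm_inv ws (perm_of_word ws x) = x"
    for x using Cons.IH by (meson pointfree_idE)+
  then show ?case by (simp add: perm_of_word_Cons fun_eq_iff)
qed

lemma word_perm_inv_eq_inv: "word_perm_inv ws = inv (perm_of_word ws)"
  using perm_of_word_word_perm_inv by (intro inv_unique_comp[symmetric]) blast+

lemma perm_of_word_eq_inv: "perm_of_word ws = inv (word_perm_inv ws)"
  using perm_of_word_word_perm_inv by (intro inv_unique_comp[symmetric]) blast+

lemma exists_word_of_perm:
  assumes "\<sigma> permutes {..<k}"
  obtains ws where "\<forall>j\<in>set ws. Suc j < k" "perm_of_word ws = \<sigma>"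
    "length ws = inversion_count k (inv \<sigma>)"
proof -
  obtain ws where ws: "\<forall>j\<in>set ws. Suc j < k" "word_perm_inv ws = inv \<sigma>"
      "length ws = inversion_count k (inv \<sigma>)"
    using exists_word_of_inversion_count[OF permutes_inv[OF assms]] by blast
  moreover have "perm_of_word ws = \<sigma>"
    using ws(2) permutes_inv_inv[OF assms] by (simp add: perm_of_word_eq_inv)
  ultimately show thesis using that by blast
qed

lemma reduced_word_exists:
  assumes "\<sigma> permutes {..<k}"
  shows "\<exists>ws. reduced_word k \<sigma> ws"
proof -
  let ?P = "\<lambda>ws. (\<forall>j\<in>set ws. Suc j < k) \<and> perm_of_word ws = \<sigma>"
  obtain ws0 where "?P ws0" using exists_word_of_perm[OF assms] by blast
  then obtain ws where "?P ws" "\<forall>ws'. ?P ws' \<longrightarrow> length ws \<le> length ws'"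
    using ex_has_least_nat[of ?P ws0 length] by blast
  then show ?thesis unfolding reduced_word_def by blast
qed

lemma reduced_word_inversion_adding:
  assumes perm: "\<sigma> permutes {..<k}" and red: "reduced_word k \<sigma> ws"
  shows "inversion_adding ws" and "length ws = inversion_count k (inv \<sigma>)"
    and "word_perm_inv ws = inv \<sigma>"
proof -
  have ws: "\<forall>j\<in>set ws. Suc j < k" "perm_of_word ws = \<sigma>"
    and minimal: "\<And>ws'. \<forall>j\<in>set ws'. Suc j < k \<Longrightarrow> perm_of_word ws' = \<sigma> \<Longrightarrow>
      length ws \<le> length ws'"
    using red unfolding reduced_word_def by auto
  then show inv: "word_perm_inv ws = inv \<sigma>" by (simp add: word_perm_inv_eq_inv)
  obtain ws0 where "\<forall>j\<in>set ws0. Suc j < k" "perm_of_word ws0 = \<sigma>"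
      "length ws0 = inversion_count k (inv \<sigma>)"
    using exists_word_of_perm[OF perm] by blast
  then have "length ws \<le> inversion_count k (inv \<sigma>)" using minimal by fastforce
  then show "length ws = inversion_count k (inv \<sigma>)"
    using inversion_count_word(1)[OF ws(1)] inv by simp
  then show "inversion_adding ws" using inversion_count_word(2)[OF ws(1)] inv by simp
qed

section \<open>The inversion polynomial\<close>

definition insert_cycle :: "nat \<Rightarrow> nat \<Rightarrow> nat \<Rightarrow> nat" where
  "insert_cycle k p v = (if v < p then v else if v < k then Suc v else if v = k then p else v)"

definition remove_cycle :: "nat \<Rightarrow> nat \<Rightarrow> nat \<Rightarrow> nat" where
  "remove_cycle k p v = (if v < p then v else if v = p then k else if v \<le> k then v - 1 else v)"

lemma remove_cycle_insert_cycle [simp]: "p \<le> k \<Longrightarrow> remove_cycle k p (insert_cycle k p v) = v"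
  unfolding insert_cycle_def remove_cycle_def by auto

lemma insert_cycle_remove_cycle [simp]: "p \<le> k \<Longrightarrow> insert_cycle k p (remove_cycle k p v) = v"
  unfolding insert_cycle_def remove_cycle_def by auto

lemma insert_cycle_permutes: "p \<le> k \<Longrightarrow> insert_cycle k p permutes {..<Suc k}"
  by (intro bij_imp_permutes bij_betw_byWitness[where f' = "remove_cycle k p"])
    (auto simp: insert_cycle_def remove_cycle_def)

lemma remove_cycle_permutes: "p \<le> k \<Longrightarrow> remove_cycle k p permutes {..<Suc k}"
  by (intro bij_imp_permutes bij_betw_byWitness[where f' = "insert_cycle k p"])
    (auto simp: insert_cycle_def remove_cycle_def)

lemma card_permutes_filter:
  assumes \<sigma>: "\<sigma> permutes {..<k}"
  shows "card {x. x < k \<and> P (\<sigma> x)} = card {y. y < k \<and> P y}"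
proof -
  have "\<sigma> ` {x. x < k \<and> P (\<sigma> x)} = {y. y < k \<and> P y}"
  proof (intro equalityI subsetI)
    fix y assume "y \<in> {y. y < k \<and> P y}"
    moreover have "inv \<sigma> y < k \<longleftrightarrow> y < k" "\<sigma> (inv \<sigma> y) = y"
      using permutes_in_image[OF permutes_inv[OF \<sigma>]] permutes_inverses(1)[OF \<sigma>] by auto
    ultimately show "y \<in> \<sigma> ` {x. x < k \<and> P (\<sigma> x)}"
      by (metis (mono_tags, lifting) image_eqI mem_Collect_eq)
  qed (use permutes_in_image[OF \<sigma>] in auto)
  moreover have "inj_on \<sigma> {x. x < k \<and> P (\<sigma> x)}"
    using inj_on_subset[OF permutes_inj[OF \<sigma>] subset_UNIV] .
  ultimately show ?thesis by (metis card_image)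
qed

lemma inversions_insert_cycle:
  assumes pk: "p \<le> k" and \<tau>: "\<tau> permutes {..<k}"
  shows "inversions (Suc k) (insert_cycle k p \<circ> \<tau>) =
    inversions k \<tau> \<union> (\<lambda>x. (x, k)) ` {x. x < k \<and> p \<le> \<tau> x}"
proof (rule set_eqI)
  fix z :: "nat \<times> nat"
  obtain x y where z: "z = (x, y)" by (cases z)
  have \<tau>_less: "\<tau> x < k \<longleftrightarrow> x < k" for x using permutes_in_image[OF \<tau>] by simp
  have "\<tau> k = k" using permutes_not_in[OF \<tau>] by simp
  then have "insert_cycle k p (\<tau> k) = p" using pk unfolding insert_cycle_def by simp
  moreover have "x < k \<Longrightarrow> p < insert_cycle k p (\<tau> x) \<longleftrightarrow> p \<le> \<tau> x"
    using \<tau>_less[of x] unfolding insert_cycle_def by auto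
  moreover have "x < k \<Longrightarrow> y < k \<Longrightarrow>
      insert_cycle k p (\<tau> y) < insert_cycle k p (\<tau> x) \<longleftrightarrow> \<tau> y < \<tau> x"
    using \<tau>_less[of x] \<tau>_less[of y] unfolding insert_cycle_def by auto
  ultimately show "z \<in> inversions (Suc k) (insert_cycle k p \<circ> \<tau>) \<longleftrightarrow>
      z \<in> inversions k \<tau> \<union> (\<lambda>x. (x, k)) ` {x. x < k \<and> p \<le> \<tau> x}"
    unfolding z inversions_def by (cases "y < k"; cases "y = k") auto
qed

lemma inversion_count_insert_cycle:
  assumes pk: "p \<le> k" and \<tau>: "\<tau> permutes {..<k}"
  shows "inversion_count (Suc k) (insert_cycle k p \<circ> \<tau>) = inversion_count k \<tau> + (k - p)"
proof -
  let ?A = "{x. x < k \<and> p \<le> \<tau> x}"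
  have "card ?A = card {y. y < k \<and> p \<le> y}" by (rule card_permutes_filter[OF \<tau>])
  also have "{y. y < k \<and> p \<le> y} = {p..<k}" by auto
  finally have "card ((\<lambda>x. (x, k)) ` ?A) = k - p" by (simp add: card_image inj_on_def)
  moreover have "inversions k \<tau> \<inter> (\<lambda>x. (x, k)) ` ?A = {}" unfolding inversions_def by auto
  ultimately show ?thesis
    unfolding inversion_count_def inversions_insert_cycle[OF assms]
    by (simp add: card_Un_disjoint finite_inversions)
qed

lemma insert_cycle_bij:
  "bij_betw (\<lambda>(p, \<tau>). insert_cycle k p \<circ> \<tau>)
     ({..k} \<times> {\<tau>. \<tau> permutes {..<k}}) {\<sigma>. \<sigma> permutes {..<Suc k}}"
  (is "bij_betw ?F ?S ?T")
proof -
  let ?G = "\<lambda>\<sigma>. (\<sigma> k, remove_cycle k (\<sigma> k) \<circ> \<sigma>)"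
  have split: "\<exists>p \<tau>. a = (p, \<tau>) \<and> p \<le> k \<and> \<tau> permutes {..<k} \<and> \<tau> k = k"
    if "a \<in> ?S" for a
    using that permutes_not_in by fastforce
  have left: "\<forall>a\<in>?S. ?G (?F a) = a"
  proof
    fix a assume "a \<in> ?S"
    then obtain p \<tau> where a: "a = (p, \<tau>)" "p \<le> k" "\<tau> k = k" using split by blast
    moreover have "insert_cycle k p k = p" using a(2) by (simp add: insert_cycle_def)
    ultimately show "?G (?F a) = a" by (simp add: fun_eq_iff)
  qed
  have k: "\<sigma> k \<le> k" if "\<sigma> \<in> ?T" for \<sigma>
    using that permutes_in_image[of \<sigma> "{..<Suc k}" k] by simp
  have right: "\<forall>\<sigma>\<in>?T. ?F (?G \<sigma>) = \<sigma>"
    using k by (simp add: fun_eq_iff)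
  have "?F ` ?S \<subseteq> ?T"
    using split permutes_compose[OF permutes_subset insert_cycle_permutes] by fastforce
  moreover have "?G ` ?T \<subseteq> ?S"
  proof (rule image_subsetI)
    fix \<sigma> assume "\<sigma> \<in> ?T"
    then have \<sigma>: "\<sigma> permutes {..<Suc k}" and "\<sigma> k \<le> k" using k by auto
    then have perm: "remove_cycle k (\<sigma> k) \<circ> \<sigma> permutes {..<Suc k}"
      by (simp add: permutes_compose remove_cycle_permutes)
    have "(remove_cycle k (\<sigma> k) \<circ> \<sigma>) k = k" by (simp add: remove_cycle_def)
    then have "remove_cycle k (\<sigma> k) \<circ> \<sigma> permutes {..<k}"
      by (intro permutes_superset[OF perm]) auto
    then show "?G \<sigma> \<in> ?S" using \<open>\<sigma> k \<le> k\<close> by simp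
  qed
  ultimately show ?thesis by (rule bij_betw_byWitness[OF left right])
qed

definition inversion_poly :: "nat \<Rightarrow> 'a::comm_ring_1 \<Rightarrow> 'a" where
  "inversion_poly k q = (\<Sum>\<sigma> | \<sigma> permutes {..<k}. q ^ inversion_count k \<sigma>)"

lemma inversion_poly_0: "inversion_poly 0 q = 1"
  by (simp add: inversion_poly_def permutes_empty inversion_count_id)

lemma inversion_poly_Suc: "inversion_poly (Suc k) q = (\<Sum>p\<le>k. q ^ p) * inversion_poly k q"
proof -
  let ?S = "{..k} \<times> {\<tau>. \<tau> permutes {..<k}}"
  have "inversion_poly (Suc k) q =
      (\<Sum>a\<in>?S. q ^ inversion_count (Suc k) ((\<lambda>(p, \<tau>). insert_cycle k p \<circ> \<tau>) a))"
    unfolding inversion_poly_def by (rule sum.reindex_bij_betw[OF insert_cycle_bij, symmetric])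
  also have "\<dots> = (\<Sum>(p, \<tau>)\<in>?S. q ^ (k - p) * q ^ inversion_count k \<tau>)"
    by (intro sum.cong refl)
      (auto simp: inversion_count_insert_cycle power_add mult.commute simp del: add_diff_assoc)
  also have "\<dots> = (\<Sum>p\<le>k. q ^ (k - p)) * inversion_poly k q"
    by (simp add: sum.cartesian_product[symmetric] sum_product inversion_poly_def)
  also have "(\<Sum>p\<le>k. q ^ (k - p)) = (\<Sum>p\<le>k. q ^ p)"
    by (rule sum.reindex_bij_witness[where i = "\<lambda>p. k - p" and j = "\<lambda>p. k - p"]) auto
  finally show ?thesis .
qed

lemma inversion_poly_nonzero:
  fixes q :: "'a::field_char_0"
  assumes "q = 1 \<or> \<not> root_of_unity q"
  shows "inversion_poly k q \<noteq> 0"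
proof (induction k)
  case (Suc k)
  have "(\<Sum>p\<le>k. q ^ p) \<noteq> 0"
  proof (cases "q = 1")
    case True then show ?thesis by (simp del: of_nat_Suc)
  next
    case False
    then have "q ^ Suc k \<noteq> 1" using assms unfolding root_of_unity_def by blast
    moreover have "(1 - q) * (\<Sum>p\<le>k. q ^ p) = 1 - q ^ Suc k" by (rule sum_gp_basic)
    ultimately show ?thesis by auto
  qed
  then show ?case using Suc by (simp add: inversion_poly_Suc)
qed (simp add: inversion_poly_0)

section \<open>Triangularity of the braiding\<close>

definition lower_band :: "nat \<Rightarrow> (nat \<Rightarrow> nat \<Rightarrow> 'a::zero) \<Rightarrow> bool" where
  "lower_band d M \<longleftrightarrow> (\<forall>p q. M p q \<noteq> 0 \<longrightarrow> p \<le> q + d)"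

lemma lower_band_mat_mult:
  assumes "lower_band d1 (A :: nat \<Rightarrow> nat \<Rightarrow> 'a::field)" "lower_band d2 B"
  shows "lower_band (d1 + d2) (mat_mult n A B)"
  unfolding lower_band_def
proof (intro allI impI)
  fix p q assume "mat_mult n A B p q \<noteq> 0"
  then obtain j where "A p j * B j q \<noteq> 0"
    unfolding mat_mult_def by (meson sum.not_neutral_contains_not_neutral)
  then have "p \<le> j + d1" "j \<le> q + d2" using assms unfolding lower_band_def by auto
  then show "p \<le> q + (d1 + d2)" by simp
qed

lemma lower_band_add:
  fixes A B :: "nat \<Rightarrow> nat \<Rightarrow> 'a::monoid_add"
  assumes "lower_band d A" "lower_band d B"
  shows "lower_band d (A + B)"
  unfolding lower_band_def
proof (intro allI impI)
  fix p q assume "(A + B) p q \<noteq> 0"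
  then have "A p q \<noteq> 0 \<or> B p q \<noteq> 0" by auto
  then show "p \<le> q + d" using assms unfolding lower_band_def by blast
qed

lemma lower_band_scal: "lower_band d A \<Longrightarrow> lower_band d (mat_scal c A)"
  unfolding lower_band_def mat_scal_def by simp

lemma lower_band_rho_y: "lower_band 1 (rho_y n \<beta>)"
  unfolding lower_band_def rho_y_def by auto

lemma lower_band_rho_g_pow: "lower_band 0 (rho_g_pow n \<gamma> \<beta> j)"
  unfolding lower_band_def rho_g_pow_def by auto

lemma lower_band_rho_Sg: "lower_band 0 (rho_Sg n \<gamma> \<beta>)"
  unfolding rho_Sg_def by (rule lower_band_rho_g_pow)

lemma lower_band_rho_Sy: "lower_band 1 (rho_Sy n \<gamma> \<beta>)"
  unfolding rho_Sy_def
  using lower_band_scal lower_band_mat_mult[OF lower_band_rho_y lower_band_rho_Sg] by fastforce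

lemma lower_band_rho_base: "lower_band 0 (rho_base n \<gamma> \<alpha> \<beta> r i)"
proof -
  have "lower_band 0 (mat_scal (\<alpha> powi r) (\<lambda>p q. if p = q then 1 else 0))"
    unfolding lower_band_def mat_scal_def by auto
  from lower_band_mat_mult[OF this lower_band_rho_g_pow] show ?thesis
    unfolding rho_base_def by simp
qed

lemma lower_band_cmat: "l \<le> k \<Longrightarrow> lower_band (k - l) (cmat n \<gamma> \<alpha> \<beta> r i k l)"
proof (induction k arbitrary: l)
  case 0
  then show ?case using lower_band_rho_base by simp
next
  case (Suc k)
  let ?A = "cmat n \<gamma> \<alpha> \<beta> r i k"
  have T1: "lower_band (Suc k - l') (mat_mult n (?A l') (rho_Sy n \<gamma> \<beta>))" if "l' \<le> k" for l'
    using lower_band_mat_mult[OF Suc.IH[OF that] lower_band_rho_Sy] that by (simp add: Suc_diff_le)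
  have T2: "lower_band (Suc k - l')
      (mat_scal c (mat_mult n (mat_mult n (rho_y n \<beta>) (?A l')) (rho_Sg n \<gamma> \<beta>)))"
    if "l' \<le> k" for l' c
    using lower_band_scal[OF lower_band_mat_mult[OF lower_band_mat_mult[OF lower_band_rho_y
          Suc.IH[OF that]] lower_band_rho_Sg]] that
    by (simp add: Suc_diff_le)
  have T3: "lower_band (Suc k - l') (mat_mult n (?A (l' - 1)) (rho_Sg n \<gamma> \<beta>))"
    if "0 < l'" "l' \<le> Suc k" for l'
  proof -
    have "l' - 1 \<le> k" "k - (l' - 1) + 0 = Suc k - l'" using that by auto
    then show ?thesis using lower_band_mat_mult[OF Suc.IH lower_band_rho_Sg] by metis
  qed
  consider "l = 0" | "0 < l" "l < Suc k" | "l = Suc k" using Suc.prems by linarith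
  then show ?case
  proof cases
    case 1
    have "cmat n \<gamma> \<alpha> \<beta> r i (Suc k) l = mat_mult n (?A 0) (rho_Sy n \<gamma> \<beta>)
        + mat_scal \<beta> (mat_mult n (mat_mult n (rho_y n \<beta>) (?A 0)) (rho_Sg n \<gamma> \<beta>))"
      using 1 by simp
    then show ?thesis unfolding 1 by (simp only:) (intro lower_band_add T1 T2; simp)
  next
    case 2
    have "cmat n \<gamma> \<alpha> \<beta> r i (Suc k) l = mat_mult n (?A l) (rho_Sy n \<gamma> \<beta>)
        + mat_scal (\<beta> * inverse (\<gamma> ^ l))
            (mat_mult n (mat_mult n (rho_y n \<beta>) (?A l)) (rho_Sg n \<gamma> \<beta>))
        + mat_mult n (?A (l - 1)) (rho_Sg n \<gamma> \<beta>)"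
      using 2 by simp
    then show ?thesis by (simp only:) (intro lower_band_add T1 T2 T3; use 2 in simp)
  next
    case 3
    then show ?thesis using T3[of "Suc k"] by simp
  qed
qed

definition triangular_braiding :: "(nat \<Rightarrow> nat \<Rightarrow> nat \<Rightarrow> nat \<Rightarrow> 'a::zero) \<Rightarrow> bool" where
  "triangular_braiding C \<longleftrightarrow> (\<forall>a b p l. C a b p l \<noteq> 0 \<longrightarrow> l \<le> a \<and> p + l \<le> a + b)"

lemma triangular_braidingD:
  "triangular_braiding C \<Longrightarrow> C a b p l \<noteq> 0 \<Longrightarrow> l \<le> a \<and> p + l \<le> a + b"
  unfolding triangular_braiding_def by blast

lemma triangular_braid_coef: "triangular_braiding (braid_coef n \<gamma> \<alpha> \<beta> r i)"
  unfolding triangular_braiding_def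
proof (intro allI impI)
  fix a b p l assume nz: "braid_coef n \<gamma> \<alpha> \<beta> r i a b p l \<noteq> 0"
  then have la: "l \<le> a" and "cmat n \<gamma> \<alpha> \<beta> r i a l p b \<noteq> 0"
    unfolding braid_coef_def by (simp_all split: if_splits)
  then have "p \<le> b + (a - l)"
    using lower_band_cmat[OF la, of n \<gamma> \<alpha> \<beta> r i] unfolding lower_band_def by blast
  then show "l \<le> a \<and> p + l \<le> a + b" using la by simp
qed

lemma mat_mult_diagonal:
  "mat_mult n (\<lambda>p q. if p = q \<and> P p then f p else 0) (\<lambda>p q. if p = q then g p else 0) =
    (\<lambda>p q. if p = q \<and> P p \<and> p < n then f p * g p else 0)" (is "?M = ?D")
proof (intro ext)
  fix p q :: nat
  have "?M p q = (\<Sum>j<n. if j = p then (if p = q \<and> P p then f p * g p else 0) else 0)"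
    unfolding mat_mult_def by (rule sum.cong) auto
  also have "\<dots> = ?D p q" by (cases "p = q \<and> P p") auto
  finally show "?M p q = ?D p q" .
qed

definition diag_braiding :: "'a::field \<Rightarrow> 'a \<Rightarrow> 'a \<Rightarrow> int \<Rightarrow> int \<Rightarrow> nat \<Rightarrow> 'a" where
  "diag_braiding \<gamma> \<alpha> \<beta> r i m = \<alpha> powi r * (\<beta> * inverse (\<gamma> ^ m)) powi (i - int m)"

lemma cmat_diagonal:
  fixes \<gamma> \<alpha> \<beta> :: "'a::field"
  assumes "\<beta> \<noteq> 0" and "\<gamma> \<noteq> 0"
  shows "cmat n \<gamma> \<alpha> \<beta> r i k k =
    (\<lambda>p q. if p = q \<and> p < n then \<alpha> powi r * (\<beta> * inverse (\<gamma> ^ p)) powi (i - int k) else 0)"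
proof (induction k)
  case 0
  have scal: "mat_scal (\<alpha> powi r) (\<lambda>p q. if p = q then 1 else 0) =
      (\<lambda>p q. if p = q \<and> True then \<alpha> powi r else 0)"
    by (simp add: mat_scal_def fun_eq_iff)
  have "cmat n \<gamma> \<alpha> \<beta> r i 0 0 = rho_base n \<gamma> \<alpha> \<beta> r i" by simp
  then show ?case unfolding rho_base_def scal rho_g_pow_def mat_mult_diagonal
    by (simp add: fun_eq_iff)
next
  case (Suc k)
  have step: "(\<beta> * inverse (\<gamma> ^ p)) powi (i - int k) * (\<beta> * inverse (\<gamma> ^ p)) powi (-1) =
      (\<beta> * inverse (\<gamma> ^ p)) powi (i - int (Suc k))" for p
  proof -
    have "(\<beta> * inverse (\<gamma> ^ p)) powi (i - int k) * (\<beta> * inverse (\<gamma> ^ p)) powi (-1) =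
        (\<beta> * inverse (\<gamma> ^ p)) powi (i - int k + (-1))"
      by (rule power_int_add[OF disjI1, symmetric]) (use assms in simp)
    moreover have "i - int k + (-1) = i - int (Suc k)" by simp
    ultimately show ?thesis by (simp only:)
  qed
  have "cmat n \<gamma> \<alpha> \<beta> r i (Suc k) (Suc k) = mat_mult n (cmat n \<gamma> \<alpha> \<beta> r i k k) (rho_Sg n \<gamma> \<beta>)"
    by simp
  then show ?case
    unfolding Suc.IH rho_Sg_def rho_g_pow_def mat_mult_diagonal mult.assoc step
    by (simp add: fun_eq_iff)
qed

lemma braid_coef_diagonal:
  fixes \<gamma> \<alpha> \<beta> :: "'a::field"
  assumes "\<beta> \<noteq> 0" "\<gamma> \<noteq> 0" "m < n"
  shows "braid_coef n \<gamma> \<alpha> \<beta> r i m m m m = diag_braiding \<gamma> \<alpha> \<beta> r i m"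
  using assms by (simp add: braid_coef_def cmat_diagonal diag_braiding_def)

section \<open>Prefix weights along a reduced word\<close>

definition basis_tensor :: "nat list \<Rightarrow> nat list \<Rightarrow> 'a::field" where
  "basis_tensor u = (\<lambda>v. if v = u then 1 else 0)"

definition prefix_weight :: "nat \<Rightarrow> (nat \<Rightarrow> nat) \<Rightarrow> nat list \<Rightarrow> nat \<Rightarrow> int" where
  "prefix_weight k R v t = (\<Sum>p<k. if R p \<le> t then int (v ! p) else 0)"

lemma sum_lessThan_change_two:
  fixes f g :: "nat \<Rightarrow> int"
  assumes jk: "Suc j < k" and eq: "\<And>p. p < k \<Longrightarrow> p \<noteq> j \<Longrightarrow> p \<noteq> Suc j \<Longrightarrow> f p = g p"
  shows "(\<Sum>p<k. f p) = (\<Sum>p<k. g p) - g j - g (Suc j) + f j + f (Suc j)"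
proof -
  have split: "(\<Sum>p<k. h p) = h j + h (Suc j) + (\<Sum>p\<in>{..<k} - {j} - {Suc j}. h p)"
    for h :: "nat \<Rightarrow> int"
    using jk by (simp add: sum.remove[of "{..<k}" j] sum.remove[of "{..<k} - {j}" "Suc j"])
  have "(\<Sum>p\<in>{..<k} - {j} - {Suc j}. f p) = (\<Sum>p\<in>{..<k} - {j} - {Suc j}. g p)"
    by (rule sum.cong) (auto intro: eq)
  then show ?thesis using split[of f] split[of g] by simp
qed

lemma prefix_weight_swap:
  assumes jk: "Suc j < k" and "length v = k"
  shows "prefix_weight k (R \<circ> adj_transp j) v t = prefix_weight k R (v[j := a, Suc j := b]) t
      + (if R j \<le> t then int (v ! Suc j) - int a else 0)
      + (if R (Suc j) \<le> t then int (v ! j) - int b else 0)"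
proof -
  let ?w = "v[j := a, Suc j := b]"
  let ?g = "\<lambda>p. if R p \<le> t then int (v ! adj_transp j p) else 0"
  let ?h = "\<lambda>p. if R p \<le> t then int (?w ! p) else 0"
  have "adj_transp j permutes {..<k}" using jk by (intro permutes_swap_id) auto
  then have "prefix_weight k (R \<circ> adj_transp j) v t = (\<Sum>p<k. ?g p)"
    unfolding prefix_weight_def using sum.permute[of "adj_transp j" "{..<k}" ?g]
    by (simp add: comp_def cong: if_cong)
  also have "\<dots> = (\<Sum>p<k. ?h p) - ?h j - ?h (Suc j) + ?g j + ?g (Suc j)"
    by (rule sum_lessThan_change_two[OF jk]) (use assms in \<open>simp add: Transposition.transpose_def\<close>)
  finally show ?thesis
    using assms unfolding prefix_weight_def by (simp add: Transposition.transpose_def)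
qed

lemma prefix_weight_replicate_update:
  assumes jk: "Suc j < k"
  shows "prefix_weight k R ((replicate k m)[j := a, Suc j := b]) t = prefix_weight k R (replicate k m) t
      + (if R j \<le> t then int a - int m else 0) + (if R (Suc j) \<le> t then int b - int m else 0)"
proof -
  let ?w = "(replicate k m)[j := a, Suc j := b]"
  let ?f = "\<lambda>p. if R p \<le> t then int (?w ! p) else 0"
  let ?g = "\<lambda>p. if R p \<le> t then int (replicate k m ! p) else 0"
  have "(\<Sum>p<k. ?f p) = (\<Sum>p<k. ?g p) - ?g j - ?g (Suc j) + ?f j + ?f (Suc j)"
    by (rule sum_lessThan_change_two[OF jk]) simp
  then show ?thesis unfolding prefix_weight_def using jk by simp
qed

lemma prefix_weight_replicate:
  assumes R: "R permutes {..<k}" and "t < k"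
  shows "prefix_weight k R (replicate k m) t = int ((t + 1) * m)"
proof -
  have "card {p. p < k \<and> R p \<le> t} = card {y. y < k \<and> y \<le> t}"
    by (rule card_permutes_filter[OF R])
  also have "{y. y < k \<and> y \<le> t} = {..t}" using assms(2) by auto
  finally have card: "card {p. p < k \<and> R p \<le> t} = t + 1" by simp
  have "prefix_weight k R (replicate k m) t = (\<Sum>p<k. if R p \<le> t then int m else 0)"
    unfolding prefix_weight_def by (rule sum.cong) auto
  also have "\<dots> = (\<Sum>p\<in>{p. p < k \<and> R p \<le> t}. int m)"
    by (simp add: sum.inter_filter[symmetric] lessThan_def)
  finally show ?thesis using card by (simp add: algebra_simps)
qed

lemma word_op_Nil: "word_op C n k [] = id"
  by (simp add: word_op_def)

lemma word_op_Cons: "word_op C n k (j # ws) = braid_op C n k j \<circ> word_op C n k ws"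
  by (simp add: word_op_def)

lemma replicate_in_words: "m < n \<Longrightarrow> replicate k m \<in> words n k"
  unfolding words_def by auto

lemma braid_op_nonzero:
  assumes "braid_op C n k j f v \<noteq> 0"
  obtains a b where "v \<in> words n k" "f (v[j := a, Suc j := b]) \<noteq> 0" "C a b (v ! j) (v ! Suc j) \<noteq> 0"
proof -
  have v: "v \<in> words n k" using assms unfolding braid_op_def by (simp split: if_splits)
  then obtain a b where "f (v[j := a, Suc j := b]) * C a b (v ! j) (v ! Suc j) \<noteq> 0"
    using assms unfolding braid_op_def by (auto elim!: sum.not_neutral_contains_not_neutral)
  then have "f (v[j := a, Suc j := b]) \<noteq> 0" "C a b (v ! j) (v ! Suc j) \<noteq> 0" by auto
  then show thesis using that v by blast
qed

(* A crossing moves label weight only towards the left strand (l <= a) and never increases the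
   total (p + l <= a + b); as the letter is an ascent of the permutation, no prefix weight grows. *)
lemma word_op_prefix_weight_le:
  assumes tri: "triangular_braiding C"
    and "\<forall>j\<in>set ws. Suc j < k" "inversion_adding ws"
    and "word_op C n k ws (basis_tensor (replicate k m)) v \<noteq> 0" and "t < k"
  shows "prefix_weight k (word_perm_inv ws) v t \<le> int ((t + 1) * m)"
  using assms(2-)
proof (induction ws arbitrary: v)
  case Nil
  then have "v = replicate k m" by (simp add: word_op_Nil basis_tensor_def split: if_splits)
  then show ?case using prefix_weight_replicate[OF permutes_id Nil.prems(4)] by (simp add: id_def)
next
  case (Cons j ws)
  let ?R = "word_perm_inv ws"
  have jk: "Suc j < k" and ascent: "?R j < ?R (Suc j)" using Cons.prems by auto
  obtain a b where v: "v \<in> words n k"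
      and nz: "word_op C n k ws (basis_tensor (replicate k m)) (v[j := a, Suc j := b]) \<noteq> 0"
      and c: "C a b (v ! j) (v ! Suc j) \<noteq> 0"
    using Cons.prems(3) by (auto simp: word_op_Cons elim: braid_op_nonzero)
  have "prefix_weight k ?R (v[j := a, Suc j := b]) t \<le> int ((t + 1) * m)"
    using Cons nz by simp
  moreover have "v ! Suc j \<le> a" "v ! j + v ! Suc j \<le> a + b"
    using triangular_braidingD[OF tri c] by auto
  then have "(if ?R j \<le> t then int (v ! Suc j) - int a else 0)
      + (if ?R (Suc j) \<le> t then int (v ! j) - int b else 0) \<le> 0"
    using ascent by auto
  moreover have "length v = k" using v unfolding words_def by simp
  ultimately have "prefix_weight k (?R \<circ> adj_transp j) v t \<le> int ((t + 1) * m)"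
    using prefix_weight_swap[OF jk, of v ?R t a b] by linarith
  then show ?case by (simp add: comp_def)
qed

lemma word_op_diagonal_coeff:
  assumes tri: "triangular_braiding C" and diag: "C m m m m = q" and "m < n"
    and "\<forall>j\<in>set ws. Suc j < k" "inversion_adding ws"
  shows "word_op C n k ws (basis_tensor (replicate k m)) (replicate k m) = q ^ length ws"
  using assms(4-)
proof (induction ws)
  case Nil
  then show ?case by (simp add: word_op_Nil basis_tensor_def)
next
  case (Cons j ws)
  let ?M = "replicate k m"
  let ?G = "word_op C n k ws (basis_tensor ?M)"
  let ?R = "word_perm_inv ws"
  have jk: "Suc j < k" and ws: "\<forall>j\<in>set ws. Suc j < k" "inversion_adding ws"
    and ascent: "?R j < ?R (Suc j)" using Cons.prems by auto
  have R: "?R j < k" "?R (Suc j) < k"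
    using permutes_in_image[OF word_perm_inv_permutes[OF ws(1)]] jk by auto
  \<comment> \<open>The prefix weights ending at the two crossing strands are maximal for \<open>m\<^sup>k\<close>.\<close>
  have off_diagonal: "?G (?M[j := a, Suc j := b]) * C a b m m = 0" if "a \<noteq> m \<or> b \<noteq> m" for a b
  proof (rule ccontr)
    assume "?G (?M[j := a, Suc j := b]) * C a b m m \<noteq> 0"
    then have G: "?G (?M[j := a, Suc j := b]) \<noteq> 0" and "C a b m m \<noteq> 0" by auto
    then have "m \<le> a" "m + m \<le> a + b" using triangular_braidingD[OF tri] by auto
    moreover have "prefix_weight k ?R (?M[j := a, Suc j := b]) (?R j) \<le> int ((?R j + 1) * m)"
      and "prefix_weight k ?R (?M[j := a, Suc j := b]) (?R (Suc j)) \<le> int ((?R (Suc j) + 1) * m)"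
      using word_op_prefix_weight_le[OF tri ws G] R by auto
    ultimately show False
      using prefix_weight_replicate_update[OF jk, of ?R m a b] ascent that
        prefix_weight_replicate[OF word_perm_inv_permutes[OF ws(1)]] R by auto
  qed
  have inner: "(\<Sum>b<n. ?G (?M[j := a, Suc j := b]) * C a b m m) = (if a = m then ?G ?M * q else 0)"
    for a
  proof -
    have "?M[j := m, Suc j := m] = ?M"
      using jk by (intro nth_equalityI) (auto simp: nth_list_update)
    then have "?G (?M[j := a, Suc j := b]) * C a b m m = (if a = m \<and> b = m then ?G ?M * q else 0)"
      for b using off_diagonal[of a b] diag by auto
    then show ?thesis using assms(3) by simp
  qed
  have "braid_op C n k j ?G ?M = (\<Sum>a<n. \<Sum>b<n. ?G (?M[j := a, Suc j := b]) * C a b m m)"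
    unfolding braid_op_def using replicate_in_words[OF assms(3)] jk by simp
  also have "\<dots> = ?G ?M * q" using inner assms(3) by simp
  finally show ?case using Cons.IH[OF ws] by (simp add: word_op_Cons)
qed

lemma braided_symmetrizer_diagonal_coeff:
  assumes "triangular_braiding C" "C m m m m = q" "m < n"
  shows "braided_symmetrizer C n k (basis_tensor (replicate k m)) (replicate k m) = inversion_poly k q"
proof -
  have "matsumoto C n k \<sigma> (basis_tensor (replicate k m)) (replicate k m) = q ^ inversion_count k (inv \<sigma>)"
    if "\<sigma> permutes {..<k}" for \<sigma>
  proof -
    let ?ws = "SOME ws. reduced_word k \<sigma> ws"
    have red: "reduced_word k \<sigma> ?ws" using reduced_word_exists[OF that] by (rule someI_ex)
    then have "\<forall>j\<in>set ?ws. Suc j < k" unfolding reduced_word_def by blast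
    then show ?thesis unfolding matsumoto_def
      using word_op_diagonal_coeff[OF assms] reduced_word_inversion_adding[OF that red] by simp
  qed
  then have "braided_symmetrizer C n k (basis_tensor (replicate k m)) (replicate k m) =
      (\<Sum>\<sigma> | \<sigma> permutes {..<k}. q ^ inversion_count k (inv \<sigma>))"
    unfolding braided_symmetrizer_def by simp
  also have "\<dots> = inversion_poly k q" unfolding inversion_poly_def
    by (rule sum.reindex_bij_witness[where i = inv and j = inv])
      (auto simp: permutes_inv permutes_inv_inv)
  finally show ?thesis .
qed

section \<open>Nonvanishing of the homogeneous components\<close>

interpretation tensor: vector_space "tscale :: 'a::field \<Rightarrow> (nat list \<Rightarrow> 'a) \<Rightarrow> nat list \<Rightarrow> 'a"
  by unfold_locales (auto simp: tscale_def fun_eq_iff algebra_simps)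

lemma braid_op_add: "braid_op C n k j (f + g) = braid_op C n k j f + braid_op C n k j g"
  unfolding braid_op_def by (auto simp: fun_eq_iff distrib_right sum.distrib)

lemma braid_op_tscale: "braid_op C n k j (tscale c f) = tscale c (braid_op C n k j f)"
  unfolding braid_op_def tscale_def by (auto simp: fun_eq_iff sum_distrib_left mult.assoc)

lemma word_op_linear:
  "word_op C n k ws (f + g) = word_op C n k ws f + word_op C n k ws g"
  "word_op C n k ws (tscale c f) = tscale c (word_op C n k ws f)"
  by (induction ws) (simp_all add: word_op_Nil word_op_Cons braid_op_add braid_op_tscale)

lemma braided_symmetrizer_add:
  "braided_symmetrizer C n k (f + g) = braided_symmetrizer C n k f + braided_symmetrizer C n k g"
  unfolding braided_symmetrizer_def matsumoto_def word_op_linear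
  by (simp add: fun_eq_iff sum.distrib)

lemma braided_symmetrizer_tscale:
  "braided_symmetrizer C n k (tscale c f) = tscale c (braided_symmetrizer C n k f)"
  unfolding braided_symmetrizer_def matsumoto_def word_op_linear
  by (simp add: fun_eq_iff tscale_def sum_distrib_left)

lemma tscale_apply: "tscale c f u = c * f u"
  by (simp add: tscale_def)

lemma subspace_symmetrizer_kernel: "tensor.subspace (symmetrizer_kernel C n k)"
proof -
  have "braided_symmetrizer C n k 0 = (\<lambda>_. 0)"
    using braided_symmetrizer_tscale[of C n k 0 0] by (simp add: tscale_def zero_fun_def)
  then show ?thesis unfolding tensor.subspace_def symmetrizer_kernel_def tensor_space_def
    by (auto simp: braided_symmetrizer_add braided_symmetrizer_tscale tscale_apply fun_eq_iff)
qed

lemma (in vector_space) dim_less_if_proper_subspace: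
  assumes K: "subspace K" and "K \<subseteq> T" "x \<in> T" "x \<notin> K" and T: "T \<subseteq> span W" "finite W"
  shows "dim K < dim T"
proof -
  obtain A where A: "A \<subseteq> K" "independent A" "K \<subseteq> span A" "card A = dim K"
    using basis_exists by blast
  have "finite A" using independent_span_bound[OF T(2) A(2)] A(1) assms(2) T(1) by blast
  have "x \<notin> span A" using span_minimal[OF A(1) K] assms(4) by blast
  then have ind: "independent (insert x A)" using A(2) by (simp add: independent_insert)
  have "insert x A \<subseteq> T" using A(1) assms(2,3) by blast
  then obtain B where B: "insert x A \<subseteq> B" "B \<subseteq> T" "independent B" "T \<subseteq> span B"
    using maximal_independent_subset_extend[OF _ ind] by blast
  have "finite B" using independent_span_bound[OF T(2) B(3)] B(2) T(1) by blast
  have "Suc (card A) = card (insert x A)"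
    using \<open>finite A\<close> \<open>x \<notin> span A\<close> span_base by (metis card_insert_disjoint)
  also have "\<dots> \<le> card B" using card_mono[OF \<open>finite B\<close> B(1)] .
  also have "\<dots> = dim T" using basis_card_eq_dim[OF B(2) B(4) B(3)] .
  finally show ?thesis using A(4) by simp
qed

lemma finite_words: "finite (words n k)"
proof -
  have "words n k = {xs. set xs \<subseteq> {..<n} \<and> length xs = k}" unfolding words_def by auto
  then show ?thesis using finite_lists_length_eq[of "{..<n}" k] by simp
qed

lemma sum_fun_apply: "finite A \<Longrightarrow> sum F A x = (\<Sum>a\<in>A. F a x)"
  by (induction rule: finite_induct) auto

lemma tensor_space_subset_span:
  "tensor_space n k \<subseteq> tensor.span ((basis_tensor :: nat list \<Rightarrow> nat list \<Rightarrow> 'a::field) ` words n k)"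
proof
  fix f :: "nat list \<Rightarrow> 'a" assume f: "f \<in> tensor_space n k"
  have "f = (\<Sum>u\<in>words n k. tscale (f u) (basis_tensor u))"
  proof (rule ext)
    fix v
    have "(\<Sum>u\<in>words n k. tscale (f u) (basis_tensor u)) v = (\<Sum>u\<in>words n k. if u = v then f v else 0)"
      by (auto simp: sum_fun_apply[OF finite_words] tscale_def basis_tensor_def intro: sum.cong)
    also have "\<dots> = f v" using f unfolding tensor_space_def by (simp add: finite_words)
    finally show "f v = (\<Sum>u\<in>words n k. tscale (f u) (basis_tensor u)) v" by simp
  qed
  also have "\<dots> \<in> tensor.span (basis_tensor ` words n k)"
    by (intro tensor.span_sum tensor.span_scale tensor.span_base) auto
  finally show "f \<in> tensor.span (basis_tensor ` words n k)" .
qed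

lemma nichols_component_dim_pos:
  fixes C :: "nat \<Rightarrow> nat \<Rightarrow> nat \<Rightarrow> nat \<Rightarrow> 'a::field"
  assumes "2 \<le> k" and x: "x \<in> tensor_space n k" and "braided_symmetrizer C n k x \<noteq> (\<lambda>_. 0)"
  shows "1 \<le> nichols_component_dim C n k"
proof -
  have "x \<notin> symmetrizer_kernel C n k" using assms(3) unfolding symmetrizer_kernel_def by blast
  moreover have "symmetrizer_kernel C n k \<subseteq> tensor_space n k"
    unfolding symmetrizer_kernel_def by blast
  ultimately have "tensor.dim (symmetrizer_kernel C n k) < tensor.dim (tensor_space n k :: (nat list \<Rightarrow> 'a) set)"
    using tensor.dim_less_if_proper_subspace[OF subspace_symmetrizer_kernel _ x _ tensor_space_subset_span]
    by (simp add: finite_words)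
  then show ?thesis unfolding nichols_component_dim_def using assms(1) by simp
qed

lemma nichols_infinite_dimensional_if_components_pos:
  assumes "\<And>k. 2 \<le> k \<Longrightarrow> 1 \<le> nichols_component_dim C n k"
  shows "nichols_infinite_dimensional C n"
  unfolding nichols_infinite_dimensional_def
proof
  fix D
  have "D < (\<Sum>k\<in>{2..<D + 3}. 1::nat)" by simp
  also have "\<dots> \<le> (\<Sum>k\<in>{2..<D + 3}. nichols_component_dim C n k)"
    by (rule sum_mono) (use assms in auto)
  also have "\<dots> \<le> (\<Sum>k<D + 3. nichols_component_dim C n k)"
    by (rule sum_mono2) auto
  finally show "\<exists>N. D < (\<Sum>k<N. nichols_component_dim C n k)" by blast
qed

theorem nichols_infinite_dimensional_if_triangular:
  fixes C :: "nat \<Rightarrow> nat \<Rightarrow> nat \<Rightarrow> nat \<Rightarrow> 'a::field_char_0"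
  assumes "triangular_braiding C" "C m m m m = q" "m < n" "q = 1 \<or> \<not> root_of_unity q"
  shows "nichols_infinite_dimensional C n"
proof (rule nichols_infinite_dimensional_if_components_pos)
  fix k :: nat assume "2 \<le> k"
  moreover have "basis_tensor (replicate k m) \<in> tensor_space n k"
    using replicate_in_words[OF assms(3)] unfolding tensor_space_def basis_tensor_def by auto
  moreover have "braided_symmetrizer C n k (basis_tensor (replicate k m)) \<noteq> (\<lambda>_. 0)"
    using braided_symmetrizer_diagonal_coeff[OF assms(1-3)] inversion_poly_nonzero[OF assms(4)]
    by (metis (mono_tags))
  ultimately show "1 \<le> nichols_component_dim C n k" by (rule nichols_component_dim_pos)
qed

section \<open>Choice of the diagonal braiding constant\<close>

lemma root_of_unity_nonzero: "root_of_unity (a :: 'a::field) \<Longrightarrow> a \<noteq> 0"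
  unfolding root_of_unity_def by (metis zero_power zero_neq_one)

lemma root_of_unity_mult:
  assumes "root_of_unity a" "root_of_unity b"
  shows "root_of_unity (a * b)"
proof -
  obtain M N where "M > 0" "a ^ M = 1" "N > 0" "b ^ N = 1"
    using assms unfolding root_of_unity_def by blast
  have "(a * b) ^ (M * N) = (a ^ M) ^ N * (b ^ N) ^ M"
    by (simp add: power_mult_distrib power_mult[symmetric] mult.commute)
  then have "(a * b) ^ (M * N) = 1" using \<open>a ^ M = 1\<close> \<open>b ^ N = 1\<close> by simp
  with \<open>M > 0\<close> \<open>N > 0\<close> show ?thesis
    unfolding root_of_unity_def by (intro exI[of _ "M * N"]) simp
qed

lemma root_of_unity_inverse: "root_of_unity a \<Longrightarrow> root_of_unity (inverse a)"
  unfolding root_of_unity_def by (auto simp: power_inverse)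

lemma root_of_unity_power:
  assumes "root_of_unity a"
  shows "root_of_unity (a ^ n)"
proof -
  obtain M where "M > 0" "a ^ M = 1" using assms unfolding root_of_unity_def by blast
  have "(a ^ n) ^ M = (a ^ M) ^ n" by (simp add: power_mult[symmetric] mult.commute)
  then have "(a ^ n) ^ M = 1" using \<open>a ^ M = 1\<close> by simp
  with \<open>M > 0\<close> show ?thesis unfolding root_of_unity_def by blast
qed

lemma root_of_unity_powi: "root_of_unity a \<Longrightarrow> root_of_unity (a powi z)"
  unfolding power_int_def by (auto intro: root_of_unity_power root_of_unity_inverse)

lemma root_of_unity_powi_eq_0:
  fixes a :: "'a::field"
  assumes "\<not> root_of_unity a" and "root_of_unity (a powi z)"
  shows "z = 0"
proof (rule ccontr)
  assume "z \<noteq> 0"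
  have "root_of_unity (a powi \<bar>z\<bar>)"
  proof (cases "z < 0")
    case True
    then have "a powi \<bar>z\<bar> = inverse (a powi z)" by (simp add: power_int_minus)
    then show ?thesis using root_of_unity_inverse[OF assms(2)] by simp
  qed (use assms(2) in simp)
  moreover have "a powi \<bar>z\<bar> = a ^ nat \<bar>z\<bar>" by (simp add: power_int_def)
  ultimately obtain N where "N > 0" "a ^ (nat \<bar>z\<bar> * N) = 1"
    unfolding root_of_unity_def by (auto simp: power_mult)
  moreover have "nat \<bar>z\<bar> * N > 0" using \<open>z \<noteq> 0\<close> \<open>N > 0\<close> by simp
  ultimately show False using assms(1) unfolding root_of_unity_def by blast
qed

lemma primitive_root_nonzero: "0 < n \<Longrightarrow> primitive_root n \<gamma> \<Longrightarrow> \<gamma> \<noteq> 0"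
  unfolding primitive_root_def by (metis power_0_left less_not_refl2 zero_neq_one)

lemma diag_braiding_0_eq:
  fixes \<gamma> \<alpha> \<beta> :: "'a::field"
  assumes "\<beta> \<noteq> 0" "\<gamma> \<noteq> 0"
  shows "diag_braiding \<gamma> \<alpha> \<beta> r i 0 = diag_braiding \<gamma> \<alpha> \<beta> r i 1 * (\<beta> * \<gamma> powi (i - 1))"
proof -
  have "diag_braiding \<gamma> \<alpha> \<beta> r i 1 * (\<beta> * \<gamma> powi (i - 1)) =
      \<alpha> powi r * (\<beta> powi (i - 1) * \<beta>) * (\<gamma> powi (i - 1) * inverse (\<gamma> powi (i - 1)))"
    by (simp add: diag_braiding_def power_int_mult_distrib power_int_inverse mult_ac)
  also have "\<beta> powi (i - 1) * \<beta> = \<beta> powi i"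
    using power_int_add_1[of \<beta> "i - 1"] assms by simp
  also have "\<gamma> powi (i - 1) * inverse (\<gamma> powi (i - 1)) = 1" using assms by simp
  finally have "diag_braiding \<gamma> \<alpha> \<beta> r i 1 * (\<beta> * \<gamma> powi (i - 1)) = \<alpha> powi r * \<beta> powi i"
    by simp
  moreover have "diag_braiding \<gamma> \<alpha> \<beta> r i 0 = \<alpha> powi r * \<beta> powi i"
    by (simp add: diag_braiding_def)
  ultimately show ?thesis by simp
qed

lemma exists_diag_braiding_not_root:
  fixes \<gamma> \<alpha> \<beta> :: "'a::field"
  assumes n: "0 < n" and \<gamma>: "primitive_root n \<gamma>" and "\<alpha> \<noteq> 0" "\<beta> \<noteq> 0"
    and "\<not> root_of_unity \<alpha>" "\<not> root_of_unity \<beta>" and "\<alpha> ^ w = \<beta> ^ n"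
  obtains m where "m < n"
    "diag_braiding \<gamma> \<alpha> \<beta> r i m = 1 \<or> \<not> root_of_unity (diag_braiding \<gamma> \<alpha> \<beta> r i m)"
proof (cases "root_of_unity (diag_braiding \<gamma> \<alpha> \<beta> r i 0)")
  case False
  then show thesis using that n by blast
next
  case root0: True
  show thesis
  proof (cases "n = 1")
    case True
    then have "\<beta> = \<alpha> ^ w" using assms(7) by simp
    then have q0: "diag_braiding \<gamma> \<alpha> \<beta> r i 0 = \<alpha> powi (r + int w * i)"
      using assms(3) by (simp add: diag_braiding_def power_int_add power_int_power)
    then have "r + int w * i = 0" using root0 root_of_unity_powi_eq_0[OF assms(5)] by simp
    then have "diag_braiding \<gamma> \<alpha> \<beta> r i 0 = 1" using q0 by simp
    then show thesis using that n by blast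
  next
    case False
    have "\<not> root_of_unity (diag_braiding \<gamma> \<alpha> \<beta> r i 1)"
    proof
      assume root1: "root_of_unity (diag_braiding \<gamma> \<alpha> \<beta> r i 1)"
      have "root_of_unity \<gamma>" using \<gamma> n unfolding primitive_root_def root_of_unity_def by blast
      then have root\<gamma>: "root_of_unity (\<gamma> powi (i - 1))" by (rule root_of_unity_powi)
      have "\<beta> = diag_braiding \<gamma> \<alpha> \<beta> r i 0 * inverse (diag_braiding \<gamma> \<alpha> \<beta> r i 1)
          * inverse (\<gamma> powi (i - 1))"
        using diag_braiding_0_eq[OF assms(4) primitive_root_nonzero[OF n \<gamma>]]
          root_of_unity_nonzero[OF root1] root_of_unity_nonzero[OF root\<gamma>]
        by (simp add: field_simps)
      also have "root_of_unity \<dots>"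
        by (intro root_of_unity_mult root_of_unity_inverse root0 root1 root\<gamma>)
      finally show False using assms(6) by blast
    qed
    moreover have "1 < n" using False n by simp
    ultimately show thesis using that by blast
  qed
qed

theorem lemma5p9:
  fixes \<gamma> \<alpha> \<beta> :: "'a::field_char_0"
    and n w :: nat and r i :: int
  assumes "alg_closed_field TYPE('a)"
    and "0 < n" and "0 < w"
    and "primitive_root n \<gamma>"
    and "\<alpha> \<noteq> 0" and "\<beta> \<noteq> 0"
    and "\<not> root_of_unity \<alpha>" and "\<not> root_of_unity \<beta>"
    and "\<alpha> ^ w = \<beta> ^ n"
  shows "nichols_infinite_dimensional (braid_coef n \<gamma> \<alpha> \<beta> r i) n"
proof -
  obtain m where "m < n"
    and q: "diag_braiding \<gamma> \<alpha> \<beta> r i m = 1 \<or> \<not> root_of_unity (diag_braiding \<gamma> \<alpha> \<beta> r i m)"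
    using exists_diag_braiding_not_root[OF assms(2,4-9)] by blast
  have "braid_coef n \<gamma> \<alpha> \<beta> r i m m m m = diag_braiding \<gamma> \<alpha> \<beta> r i m"
    using braid_coef_diagonal assms(2,4,6) primitive_root_nonzero \<open>m < n\<close> by blast
  then show ?thesis
    using nichols_infinite_dimensional_if_triangular[OF triangular_braid_coef _ \<open>m < n\<close> q] by blast
qed

end
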